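(* Let $z_0\in\Delta\setminus\{0\}$ and let $c\in\mathbb R$ with $0\le c<\frac{1}{16(1+\varepsilon)^3}$. Then every infinitesimal extremal disc for the pair $\big((0,0),(1,cz_0)\big)$ in $\Omega$ is a complex geodesic and an infinitesimal complex geodesic of $\Omega$.
   Context: $\Delta$ denotes the unit disc in $\mathbb C$ and $\Delta_r$ the disc of radius $r$ centered at $0$. Fix $0<\varepsilon<\frac{1}{100}$. Let $\rho(z,w)=|z|^2+|w|^2-\operatorname{Re}(\bar z^4w^2)-1$ on $\mathbb C^2$, and $\Omega=\{\rho<0\}\cap\big(\Delta_{1+\varepsilon}\times\Delta_{\frac{1}{4(1+\varepsilon)^3}}\big)$. A holomorphic $f:\Delta\to\Omega$ is an infinitesimal extremal disc for $(p,v)$ if $f(0)=p$, $f'(0)=\lambda v$ with $\lambda>0$, and for every holomorphic $g:\Delta\to\Omega$ with $g(0)=p$, $g'(0)=\mu v$, $\mu>0$, one has $\mu\le\lambda$. It is a complex geodesic if $d_\Omega(f(\zeta),f(\zeta'))=d_\Delta(\zeta,\zeta')$ for all $\zeta,\zeta'\in\Delta$, and an infinitesimal complex geodesic if $K_\Omega(f(\zeta),d_\zeta f(v_0))=K_\Delta(\zeta,v_0)$ for all $\zeta\in\Delta$, $v_0\in\mathbb C$ ($K,d$ the Kobayashi metric and distance; on $\Delta$ the Poincaré ones). *)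

theory Defs
  imports "HOL-Analysis.Analysis"
begin

definition rho :: "complex \<times> complex \<Rightarrow> real" where
  "rho p = (cmod (fst p))^2 + (cmod (snd p))^2 - Re ((cnj (fst p))^4 * (snd p)^2) - 1"

definition Omega :: "real \<Rightarrow> (complex \<times> complex) set" where
  "Omega \<epsilon> = {p. rho p < 0} \<inter>
     (ball 0 (1 + \<epsilon>) \<times> ball 0 (1 / (4 * (1 + \<epsilon>)^3)))"

definition hol_map :: "(complex \<times> complex) set \<Rightarrow> (complex \<Rightarrow> complex \<times> complex) \<Rightarrow> bool" where
  "hol_map D f \<longleftrightarrow> (\<lambda>z. fst (f z)) holomorphic_on ball 0 1 \<and>
                     (\<lambda>z. snd (f z)) holomorphic_on ball 0 1 \<and>
                     (\<forall>z\<in>ball 0 1. f z \<in> D)"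

definition cderiv :: "(complex \<Rightarrow> complex \<times> complex) \<Rightarrow> complex \<Rightarrow> complex \<times> complex" where
  "cderiv f z = (deriv (\<lambda>w. fst (f w)) z, deriv (\<lambda>w. snd (f w)) z)"

definition inf_extremal ::
  "(complex \<times> complex) set \<Rightarrow> complex \<times> complex \<Rightarrow> complex \<times> complex \<Rightarrow> (complex \<Rightarrow> complex \<times> complex) \<Rightarrow> bool" where
  "inf_extremal D p v f \<longleftrightarrow> hol_map D f \<and> f 0 = p \<and>
     (\<exists>lam>0. cderiv f 0 = lam *\<^sub>R v \<and>
        (\<forall>g \<mu>. hol_map D g \<and> g 0 = p \<and> \<mu> > 0 \<and> cderiv g 0 = \<mu> *\<^sub>R v \<longrightarrow> \<mu> \<le> lam))"

definition poincare_dist :: "complex \<Rightarrow> complex \<Rightarrow> real" where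
  "poincare_dist a b = artanh (cmod ((a - b) / (1 - cnj a * b)))"

definition poincare_metric :: "complex \<Rightarrow> complex \<Rightarrow> real" where
  "poincare_metric z v = cmod v / (1 - (cmod z)^2)"

definition kob_metric :: "(complex \<times> complex) set \<Rightarrow> complex \<times> complex \<Rightarrow> complex \<times> complex \<Rightarrow> real" where
  "kob_metric D p v = Inf {1 / r | r. r > 0 \<and> (\<exists>g. hol_map D g \<and> g 0 = p \<and> cderiv g 0 = r *\<^sub>R v)}"

definition kob_dist :: "(complex \<times> complex) set \<Rightarrow> complex \<times> complex \<Rightarrow> complex \<times> complex \<Rightarrow> real" where
  "kob_dist D p q = Inf {s. \<exists>(m::nat) (x::nat \<Rightarrow> complex \<times> complex) f a b.
      x 0 = p \<and> x m = q \<and>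
      (\<forall>j<m. hol_map D (f j) \<and> a j \<in> ball 0 1 \<and> b j \<in> ball 0 1 \<and>
              f j (a j) = x j \<and> f j (b j) = x (Suc j)) \<and>
      s = (\<Sum>j<m. poincare_dist (a j) (b j))}"

definition complex_geodesic :: "(complex \<times> complex) set \<Rightarrow> (complex \<Rightarrow> complex \<times> complex) \<Rightarrow> bool" where
  "complex_geodesic D f \<longleftrightarrow> hol_map D f \<and>
     (\<forall>\<zeta>\<in>ball 0 1. \<forall>\<zeta>'\<in>ball 0 1. kob_dist D (f \<zeta>) (f \<zeta>') = poincare_dist \<zeta> \<zeta>')"

definition inf_complex_geodesic :: "(complex \<times> complex) set \<Rightarrow> (complex \<Rightarrow> complex \<times> complex) \<Rightarrow> bool" where
  "inf_complex_geodesic D f \<longleftrightarrow> hol_map D f \<and>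
     (\<forall>\<zeta>\<in>ball 0 1. \<forall>v0. kob_metric D (f \<zeta>) (v0 * fst (cderiv f \<zeta>), v0 * snd (cderiv f \<zeta>))
                           = poincare_metric \<zeta> v0)"

end

theory Submission
  imports Defs "HOL-Complex_Analysis.Complex_Analysis"
begin

text \<open>
  For \<open>\<epsilon> \<ge> 0\<close> the projection to the first coordinate maps \<open>\<Omega>\<close> into the unit disc, and for
  \<open>\<bar>a\<bar> < 1 / (16 (1 + \<epsilon>)\<^sup>3)\<close> the graph \<open>z \<mapsto> (z, a z + cnj a z\<^sup>3)\<close> is an analytic disc
  in \<open>\<Omega>\<close> with velocity \<open>(1, a)\<close> at the origin. Hence an extremal disc \<open>f\<close> for \<open>((0, 0), (1, a))\<close>
  has \<open>f'(0) = \<lambda> (1, a)\<close> with \<open>\<lambda> \<ge> 1\<close>, while the Schwarz lemma applied to \<open>fst \<circ> f\<close> gives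
  \<open>\<lambda> \<le> 1\<close>; the equality case forces \<open>fst \<circ> f = id\<close>. A disc admitting such a holomorphic
  left inverse \<open>\<Omega> \<rightarrow> \<Delta>\<close> is a complex geodesic and an infinitesimal one: by Schwarz--Pick,
  the projection of any Kobayashi chain or competing disc in \<open>\<Omega>\<close> is at least as long in the
  Poincare metric, and \<open>f\<close> attains these lower bounds.
\<close>

section \<open>The Schwarz--Pick lemma and the Poincare distance\<close>

definition pseudo_hyperbolic_dist :: "complex \<Rightarrow> complex \<Rightarrow> real" where
  "pseudo_hyperbolic_dist a b = cmod (Moebius_function 0 a b)"

lemma poincare_dist_eq_artanh: "poincare_dist a b = artanh (pseudo_hyperbolic_dist a b)"
  by (simp add: poincare_dist_def pseudo_hyperbolic_dist_def Moebius_function_simple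
      norm_divide norm_minus_commute)

lemma pseudo_hyperbolic_dist_commute: "pseudo_hyperbolic_dist a b = pseudo_hyperbolic_dist b a"
proof -
  have "cmod (1 - cnj a * b) = cmod (cnj (1 - cnj a * b))" by (rule complex_mod_cnj[symmetric])
  also have "\<dots> = cmod (1 - cnj b * a)" by (simp add: mult.commute)
  finally show ?thesis
    by (simp add: pseudo_hyperbolic_dist_def Moebius_function_simple norm_divide norm_minus_commute)
qed

lemma pseudo_hyperbolic_dist_self [simp]: "pseudo_hyperbolic_dist a a = 0"
  by (simp add: pseudo_hyperbolic_dist_def Moebius_function_eq_zero)

lemma pseudo_hyperbolic_dist_lt_1:
  "a \<in> ball 0 1 \<Longrightarrow> b \<in> ball 0 1 \<Longrightarrow> pseudo_hyperbolic_dist a b < 1"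
  by (simp add: pseudo_hyperbolic_dist_def Moebius_function_norm_lt_1)

lemma Moebius_function_in_ball:
  "cmod w < 1 \<Longrightarrow> z \<in> ball 0 1 \<Longrightarrow> Moebius_function t w z \<in> ball 0 1"
  by (simp add: Moebius_function_norm_lt_1)

lemma holomorphic_on_Moebius_compose:
  assumes "g holomorphic_on ball 0 1" "g ` ball 0 1 \<subseteq> ball 0 1" "cmod w < 1"
  shows "(Moebius_function t w \<circ> g) holomorphic_on ball 0 1"
  using holomorphic_on_compose_gen[OF assms(1) Moebius_function_holomorphic[OF assms(3)] assms(2)] .

lemma Schwarz_Pick:
  assumes hol: "g holomorphic_on ball 0 1" and into: "g ` ball 0 1 \<subseteq> ball 0 1"
    and a: "a \<in> ball 0 1" and b: "b \<in> ball 0 1"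
  shows "pseudo_hyperbolic_dist (g a) (g b) \<le> pseudo_hyperbolic_dist a b"
proof -
  have na: "cmod (-a) < 1" and nga: "cmod (g a) < 1" using a into by (auto simp: image_subset_iff)
  define h where "h = Moebius_function 0 (g a) \<circ> g \<circ> Moebius_function 0 (-a)"
  have "g \<circ> Moebius_function 0 (-a) holomorphic_on ball 0 1"
    by (rule holomorphic_on_compose_gen[OF Moebius_function_holomorphic[OF na] hol])
       (use na in \<open>auto simp: Moebius_function_norm_lt_1\<close>)
  hence holh: "h holomorphic_on ball 0 1" unfolding h_def comp_assoc
    by (rule holomorphic_on_Moebius_compose) (use into na Moebius_function_in_ball in \<open>auto simp: nga\<close>)
  have h0: "h 0 = 0"
    by (simp add: h_def Moebius_function_of_zero Moebius_function_eq_zero)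
  have hn: "cmod (h z) < 1" if "cmod z < 1" for z
  proof -
    have "g (Moebius_function 0 (-a) z) \<in> ball 0 1"
      using into Moebius_function_in_ball[OF na, of z 0] that by (meson image_subset_iff mem_ball_0)
    thus ?thesis using nga by (simp add: h_def Moebius_function_norm_lt_1)
  qed
  define \<xi> where "\<xi> = Moebius_function 0 a b"
  have \<xi>: "cmod \<xi> < 1" using a b by (simp add: \<xi>_def Moebius_function_norm_lt_1)
  have "Moebius_function 0 (-a) \<xi> = b" unfolding \<xi>_def
    by (rule Moebius_function_compose) (use a b in auto)
  hence "h \<xi> = Moebius_function 0 (g a) (g b)" by (simp add: h_def)
  with Schwarz_Lemma(1)[OF holh h0 hn \<xi>] show ?thesis
    by (simp add: pseudo_hyperbolic_dist_def \<xi>_def)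
qed

lemma Schwarz_Pick_deriv:
  assumes hol: "g holomorphic_on ball 0 1" and into: "g ` ball 0 1 \<subseteq> ball 0 1"
  shows "cmod (deriv g 0) \<le> 1 - (cmod (g 0))^2"
proof -
  define w where "w = g 0"
  have nw: "cmod w < 1" using into by (force simp: w_def)
  define h where "h = Moebius_function 0 w \<circ> g"
  have holh: "h holomorphic_on ball 0 1"
    unfolding h_def by (rule holomorphic_on_Moebius_compose[OF hol into nw])
  have h0: "h 0 = 0" by (simp add: h_def w_def Moebius_function_eq_zero)
  have hn: "cmod (h z) < 1" if "cmod z < 1" for z
    using that nw into by (force simp: h_def Moebius_function_norm_lt_1)
  define D where "D = 1 - cnj w * w"
  have D: "D = of_real (1 - (cmod w)^2)"
    unfolding D_def by (simp only: of_real_diff of_real_1 complex_norm_square mult.commute)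
  have Dpos: "1 - (cmod w)^2 > 0" using nw by (simp add: abs_square_less_1)
  hence "D \<noteq> 0" unfolding D by (simp only: of_real_eq_0_iff)
  hence "((\<lambda>z. (z - w) / (1 - cnj w * z)) has_field_derivative 1 / D) (at w)"
    by (auto intro!: derivative_eq_intros simp: D_def[symmetric] power2_eq_square)
  hence dm: "(Moebius_function 0 w has_field_derivative 1 / D) (at w)"
    by (simp add: Moebius_function_simple[abs_def])
  have "(g has_field_derivative deriv g 0) (at 0)"
    by (rule holomorphic_derivI[OF hol]) auto
  from DERIV_chain[OF dm[unfolded w_def] this]
  have "deriv h 0 = deriv g 0 / D"
    by (intro DERIV_imp_deriv) (simp add: h_def w_def)
  moreover have "cmod D = 1 - (cmod w)^2" unfolding D using Dpos by (simp only: norm_of_real)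
  ultimately show ?thesis
    using Schwarz_Lemma(2)[OF holh h0 hn, of 0] Dpos by (simp add: norm_divide divide_le_eq w_def)
qed

lemma pseudo_hyperbolic_dist_le:
  assumes u: "cmod u < 1" and w: "cmod w < 1"
  shows "pseudo_hyperbolic_dist u w \<le> (cmod u + cmod w) / (1 + cmod u * cmod w)"
proof -
  define A where "A = cmod u"
  define B where "B = cmod w"
  define N where "N = cmod (w - u)"
  define D where "D = cmod (1 - cnj u * w)"
  have A: "0 \<le> A" "A < 1" and B: "0 \<le> B" "B < 1" using u w by (auto simp: A_def B_def)
  have "cmod (cnj u * w) < 1" using norm_mult_less[OF _ w, of "cnj u" 1] u by simp
  hence Dpos: "D > 0" unfolding D_def by (metis norm_one right_minus_eq zero_less_norm_iff order.irrefl)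
  have Dle: "D \<le> 1 + A * B" unfolding D_def A_def B_def
    using norm_triangle_ineq4[of 1 "cnj u * w"] by (simp add: norm_mult)
  define P where "P = (1 - A^2) * (1 - B^2)"
  have N2: "N^2 = D^2 - P" unfolding P_def D_def N_def A_def B_def cmod_power2
    by (simp add: power2_eq_square algebra_simps)
  have AB2: "(A + B)^2 = (1 + A*B)^2 - P" unfolding P_def by (simp add: power2_eq_square algebra_simps)
  have "P \<ge> 0" using A B by (simp add: P_def power_le_one)
  moreover have "D^2 \<le> (1 + A*B)^2" using Dle Dpos by (intro power_mono) auto
  ultimately have "D^2 * P \<le> (1 + A*B)^2 * P" by (rule mult_right_mono[rotated])
  hence "(N * (1 + A*B))^2 \<le> ((A + B) * D)^2"
    unfolding power_mult_distrib N2 AB2 by (simp add: algebra_simps)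
  hence "N * (1 + A*B) \<le> (A + B) * D"
    by (rule power2_le_imp_le) (use A B Dpos in auto)
  hence "N / D \<le> (A + B) / (1 + A*B)"
    using A B Dpos by (simp add: field_simps add_pos_nonneg)
  thus ?thesis
    by (simp add: pseudo_hyperbolic_dist_def Moebius_function_simple norm_divide N_def D_def A_def B_def)
qed

lemma artanh_real_mono:
  fixes x y :: real
  assumes "-1 < x" "x \<le> y" "y < 1"
  shows "artanh x \<le> artanh y"
proof -
  have "(1+x)/(1-x) \<le> (1+y)/(1-y)" using assms
    by (simp add: divide_simps algebra_simps)
  moreover have "0 < (1+x)/(1-x)" using assms by simp
  ultimately show ?thesis unfolding artanh_def by simp
qed

lemma artanh_real_add:
  fixes x y :: real
  assumes x: "\<bar>x\<bar> < 1" and y: "\<bar>y\<bar> < 1"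
  shows "artanh ((x + y) / (1 + x*y)) = artanh x + artanh y"
proof -
  have "\<bar>x * y\<bar> < 1" using abs_mult_less[OF x y] by (simp add: abs_mult)
  hence p: "1 + x*y \<noteq> 0" by linarith
  have nz: "1 - x \<noteq> 0" "1 - y \<noteq> 0" using x y by auto
  have "1 + (x + y) / (1 + x*y) = (1 + x) * (1 + y) / (1 + x*y)"
    and "1 - (x + y) / (1 + x*y) = (1 - x) * (1 - y) / (1 + x*y)"
    using p by (simp_all add: field_simps)
  hence "(1 + (x + y) / (1 + x*y)) / (1 - (x + y) / (1 + x*y)) = ((1 + x) / (1 - x)) * ((1 + y) / (1 - y))"
    using p nz by simp
  moreover have "0 < (1 + x) / (1 - x)" "0 < (1 + y) / (1 - y)" using x y by auto
  ultimately show ?thesis unfolding artanh_def by (simp add: ln_mult add_divide_distrib)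
qed

lemma poincare_dist_triangle:
  assumes a: "a \<in> ball 0 1" and b: "b \<in> ball 0 1" and c: "c \<in> ball 0 1"
  shows "poincare_dist a c \<le> poincare_dist a b + poincare_dist b c"
proof -
  have nb: "cmod (-b) < 1" using b by auto
  define u where "u = Moebius_function 0 b a"
  define w where "w = Moebius_function 0 b c"
  define p q where "p = pseudo_hyperbolic_dist a b" and "q = pseudo_hyperbolic_dist b c"
  have uw: "u \<in> ball 0 1" "w \<in> ball 0 1"
    using a b c by (auto simp: u_def w_def Moebius_function_norm_lt_1)
  have pq: "0 \<le> p" "p < 1" "0 \<le> q" "q < 1"
    using a b c by (auto simp: p_def q_def pseudo_hyperbolic_dist_def Moebius_function_norm_lt_1)
  have "Moebius_function 0 (-b) u = a" "Moebius_function 0 (-b) w = c"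
    unfolding u_def w_def by (rule Moebius_function_compose; use a b c in auto)+
  \<comment> \<open>Moebius maps are isometries, so by Schwarz--Pick we may move \<open>b\<close> to the origin\<close>
  moreover have "pseudo_hyperbolic_dist (Moebius_function 0 (-b) u) (Moebius_function 0 (-b) w)
      \<le> pseudo_hyperbolic_dist u w"
    by (rule Schwarz_Pick[OF Moebius_function_holomorphic[OF nb] _ uw])
       (use nb in \<open>auto simp: Moebius_function_norm_lt_1\<close>)
  moreover have "p = cmod u" "q = cmod w"
    by (simp_all add: p_def q_def u_def w_def pseudo_hyperbolic_dist_def[symmetric]
        pseudo_hyperbolic_dist_commute[of a b])
  hence "pseudo_hyperbolic_dist u w \<le> (p + q) / (1 + p * q)"
    using pseudo_hyperbolic_dist_le[of u w] uw by simp
  ultimately have le: "pseudo_hyperbolic_dist a c \<le> (p + q) / (1 + p * q)" by simp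
  have "(p + q) / (1 + p * q) < 1"
  proof -
    have "0 < (1 - p) * (1 - q)" using pq by simp
    thus ?thesis using pq by (simp add: algebra_simps add_pos_nonneg)
  qed
  hence "artanh (pseudo_hyperbolic_dist a c) \<le> artanh ((p + q) / (1 + p * q))"
    using le by (intro artanh_real_mono) (auto simp: pseudo_hyperbolic_dist_def intro: less_le_trans[of "-1" 0])
  also have "\<dots> = artanh p + artanh q" by (rule artanh_real_add) (use pq in auto)
  finally show ?thesis by (simp add: poincare_dist_eq_artanh p_def q_def)
qed

section \<open>Discs with a holomorphic left inverse onto the unit disc\<close>

lemma poincare_dist_fst_le_chain_length:
  assumes proj: "fst ` D \<subseteq> ball 0 1"
    and chain: "\<forall>j<m. hol_map D (f j) \<and> a j \<in> ball 0 1 \<and> b j \<in> ball 0 1 \<and>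
              f j (a j) = x j \<and> f j (b j) = x (Suc j)"
  shows "poincare_dist (fst (x 0)) (fst (x m)) \<le> (\<Sum>j<m. poincare_dist (a j) (b j))"
  using chain
proof (induction m)
  case 0
  then show ?case by (simp add: poincare_dist_eq_artanh)
next
  case (Suc m)
  have fm: "hol_map D (f m)" "a m \<in> ball 0 1" "b m \<in> ball 0 1"
    "f m (a m) = x m" "f m (b m) = x (Suc m)" using Suc.prems by auto
  have in_disc: "fst (x j) \<in> ball 0 1" if "j \<le> Suc m" for j
  proof -
    obtain k \<zeta> where "k \<le> m" "\<zeta> \<in> ball 0 1" "hol_map D (f k)" "f k \<zeta> = x j"
      using \<open>j \<le> Suc m\<close> Suc.prems fm
      by (cases "j = Suc m") (metis le_refl, metis less_Suc_eq_le le_SucE)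
    then show ?thesis using proj unfolding hol_map_def by force
  qed
  have "(\<lambda>z. fst (f m z)) holomorphic_on ball 0 1" "(\<lambda>z. fst (f m z)) ` ball 0 1 \<subseteq> ball 0 1"
    using fm(1) proj unfolding hol_map_def by auto
  from Schwarz_Pick[OF this fm(2,3)]
  have "pseudo_hyperbolic_dist (fst (x m)) (fst (x (Suc m))) \<le> pseudo_hyperbolic_dist (a m) (b m)"
    using fm by simp
  hence "poincare_dist (fst (x m)) (fst (x (Suc m))) \<le> poincare_dist (a m) (b m)"
    unfolding poincare_dist_eq_artanh using fm(2,3) pseudo_hyperbolic_dist_lt_1
    by (intro artanh_real_mono) (auto simp: pseudo_hyperbolic_dist_def intro: less_le_trans[of "-1" 0])
  moreover have "poincare_dist (fst (x 0)) (fst (x (Suc m)))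
      \<le> poincare_dist (fst (x 0)) (fst (x m)) + poincare_dist (fst (x m)) (fst (x (Suc m)))"
    by (rule poincare_dist_triangle) (use in_disc in auto)
  ultimately show ?case using Suc by simp
qed

lemma complex_geodesic_if_fst_eq_id:
  assumes proj: "fst ` D \<subseteq> ball 0 1" and f: "hol_map D f"
    and fst_f: "\<And>z. z \<in> ball 0 1 \<Longrightarrow> fst (f z) = z"
  shows "complex_geodesic D f"
  unfolding complex_geodesic_def
proof (intro conjI ballI)
  fix \<zeta> \<zeta>' :: complex assume z: "\<zeta> \<in> ball 0 1" and z': "\<zeta>' \<in> ball 0 1"
  show "kob_dist D (f \<zeta>) (f \<zeta>') = poincare_dist \<zeta> \<zeta>'"
    unfolding kob_dist_def
  proof (rule cInf_eq_minimum, goal_cases)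
    case 1
    show ?case using f z z'
      by (intro CollectI exI[of _ "1::nat"] exI[of _ "\<lambda>j. if j = 0 then f \<zeta> else f \<zeta>'"]
          exI[of _ "\<lambda>_. f"] exI[of _ "\<lambda>_. \<zeta>"] exI[of _ "\<lambda>_. \<zeta>'"]) auto
  next
    case (2 s)
    then obtain m x g a b where "x 0 = f \<zeta>" "x m = f \<zeta>'"
      and chain: "\<forall>j<m. hol_map D (g j) \<and> a j \<in> ball 0 1 \<and> b j \<in> ball 0 1 \<and>
              g j (a j) = x j \<and> g j (b j) = x (Suc j)"
      and "s = (\<Sum>j<m. poincare_dist (a j) (b j))" by blast
    with poincare_dist_fst_le_chain_length[OF proj chain] show ?case
      using fst_f z z' by simp
  qed
qed (fact f)

lemma Inf_reciprocals_eq: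
  fixes a b :: real
  assumes a: "0 \<le> a" and b: "0 < b"
    and le: "\<And>r. 0 < r \<Longrightarrow> P r \<Longrightarrow> r * a \<le> b"
    and zero: "\<And>r. a = 0 \<Longrightarrow> 0 < r \<Longrightarrow> P r"
    and pos: "0 < a \<Longrightarrow> P (b / a)"
  shows "Inf {1 / r | r. 0 < r \<and> P r} = a / b"
proof (cases "a = 0")
  case True
  have "Inf {1 / r | r. 0 < r \<and> P r} = 0"
  proof (rule cInf_eq_non_empty)
    show "{1 / r | r. 0 < r \<and> P r} \<noteq> {}" using zero[OF True, of 1] by fastforce
    fix y assume lower: "\<And>x. x \<in> {1 / r | r. 0 < r \<and> P r} \<Longrightarrow> y \<le> x"
    show "y \<le> 0"
    proof (rule ccontr)
      assume "\<not> y \<le> 0"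
      hence "1 / (2 / y) \<in> {1 / r | r. 0 < r \<and> P r}"
        using zero[OF True, of "2 / y"] by (intro CollectI exI[of _ "2 / y"]) auto
      with \<open>\<not> y \<le> 0\<close> lower show False by fastforce
    qed
  qed auto
  thus ?thesis using True by simp
next
  case False
  with a have a: "0 < a" by simp
  show ?thesis
  proof (rule cInf_eq_minimum)
    show "a / b \<in> {1 / r | r. 0 < r \<and> P r}"
      using pos[OF a] a b by (intro CollectI exI[of _ "b / a"]) auto
    fix x assume "x \<in> {1 / r | r. 0 < r \<and> P r}"
    then obtain r where x: "x = 1 / r" and r: "0 < r" "P r" by blast
    from le[OF r] have "a * r \<le> b" by (simp add: mult.commute)
    with r b show "a / b \<le> x" unfolding x by (simp add: divide_simps)
  qed
qed

lemma fst_cderiv_eq_1: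
  assumes "\<And>z. z \<in> ball 0 1 \<Longrightarrow> fst (f z) = z" and "\<zeta> \<in> ball 0 1"
  shows "fst (cderiv f \<zeta>) = 1"
proof -
  have "eventually (\<lambda>z. fst (f z) = z) (nhds \<zeta>)"
    using eventually_nhds_in_open[OF open_ball assms(2)] by (rule eventually_mono) (use assms(1) in auto)
  hence "deriv (\<lambda>z. fst (f z)) \<zeta> = deriv (\<lambda>z. z) \<zeta>" by (rule deriv_cong_ev) simp
  thus ?thesis by (simp add: cderiv_def)
qed

lemma norm_fst_cderiv_le:
  assumes "fst ` D \<subseteq> ball 0 1" "hol_map D g"
  shows "cmod (fst (cderiv g 0)) \<le> 1 - (cmod (fst (g 0)))^2"
proof -
  have "(\<lambda>z. fst (g z)) holomorphic_on ball 0 1" "(\<lambda>z. fst (g z)) ` ball 0 1 \<subseteq> ball 0 1"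
    using assms unfolding hol_map_def by auto
  from Schwarz_Pick_deriv[OF this] show ?thesis by (simp add: cderiv_def)
qed

lemma hol_map_compose_Moebius:
  assumes f: "hol_map D f" and \<zeta>: "\<zeta> \<in> ball 0 1" and u: "cmod u = 1"
  defines "\<phi> \<equiv> \<lambda>\<eta>. Moebius_function 0 (-\<zeta>) (u * \<eta>)"
    and "\<mu> \<equiv> u * of_real (1 - (cmod \<zeta>)^2)"
  shows "hol_map D (f \<circ> \<phi>)" and "(f \<circ> \<phi>) 0 = f \<zeta>"
    and "cderiv (f \<circ> \<phi>) 0 = (\<mu> * fst (cderiv f \<zeta>), \<mu> * snd (cderiv f \<zeta>))"
proof -
  have n\<zeta>: "cmod (-\<zeta>) < 1" using \<zeta> by simp
  have \<phi>_ball: "\<phi> ` ball 0 1 \<subseteq> ball 0 1"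
    using u n\<zeta> by (auto simp: \<phi>_def norm_mult intro!: Moebius_function_norm_lt_1)
  have "(Moebius_function 0 (-\<zeta>) \<circ> (\<lambda>\<eta>. u * \<eta>)) holomorphic_on ball 0 1"
    by (rule holomorphic_on_Moebius_compose[OF _ _ n\<zeta>]) (use u in \<open>auto simp: norm_mult\<close>)
  hence \<phi>_hol: "\<phi> holomorphic_on ball 0 1" by (simp add: \<phi>_def o_def)
  have \<phi>0: "\<phi> 0 = \<zeta>" by (simp add: \<phi>_def Moebius_function_of_zero)
  have "cnj \<zeta> * \<zeta> = of_real ((cmod \<zeta>)^2)" by (simp only: complex_norm_square mult.commute)
  hence d\<phi>: "(\<phi> has_field_derivative \<mu>) (at 0)"
    unfolding \<phi>_def \<mu>_def Moebius_function_def
    by (auto intro!: derivative_eq_intros simp: algebra_simps)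
  have deriv_comp: "deriv (\<lambda>\<eta>. h (\<phi> \<eta>)) 0 = \<mu> * deriv h \<zeta>" if "h holomorphic_on ball 0 1" for h
  proof -
    have "(h has_field_derivative deriv h \<zeta>) (at (\<phi> 0))"
      using holomorphic_derivI[OF that] \<zeta> by (simp add: \<phi>0)
    from DERIV_chain[OF this d\<phi>] show ?thesis by (intro DERIV_imp_deriv) (simp add: o_def mult.commute)
  qed
  have h1: "(\<lambda>z. fst (f z)) holomorphic_on ball 0 1" and h2: "(\<lambda>z. snd (f z)) holomorphic_on ball 0 1"
    and in_D: "\<And>z. z \<in> ball 0 1 \<Longrightarrow> f z \<in> D" using f unfolding hol_map_def by auto
  show "hol_map D (f \<circ> \<phi>)" unfolding hol_map_def o_def
    using holomorphic_on_compose_gen[OF \<phi>_hol h1 \<phi>_ball] holomorphic_on_compose_gen[OF \<phi>_hol h2 \<phi>_ball]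
      in_D \<phi>_ball by (auto simp: o_def)
  show "(f \<circ> \<phi>) 0 = f \<zeta>" by (simp add: \<phi>0)
  show "cderiv (f \<circ> \<phi>) 0 = (\<mu> * fst (cderiv f \<zeta>), \<mu> * snd (cderiv f \<zeta>))"
    using deriv_comp[OF h1] deriv_comp[OF h2] by (simp add: cderiv_def o_def)
qed

lemma inf_complex_geodesic_if_fst_eq_id:
  assumes proj: "fst ` D \<subseteq> ball 0 1" and f: "hol_map D f"
    and fst_f: "\<And>z. z \<in> ball 0 1 \<Longrightarrow> fst (f z) = z"
  shows "inf_complex_geodesic D f"
  unfolding inf_complex_geodesic_def
proof (intro conjI ballI allI)
  fix \<zeta> v0 :: complex assume \<zeta>: "\<zeta> \<in> ball 0 1"
  define d where "d = snd (cderiv f \<zeta>)"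
  have cd: "cderiv f \<zeta> = (1, d)"
    using fst_cderiv_eq_1[OF fst_f \<zeta>] by (simp add: d_def prod_eq_iff)
  define P where "P r \<longleftrightarrow> (\<exists>g. hol_map D g \<and> g 0 = f \<zeta> \<and> cderiv g 0 = r *\<^sub>R (v0, v0 * d))" for r
  have "0 < 1 - (cmod \<zeta>)^2" using \<zeta> by (simp add: abs_square_less_1)
  hence "Inf {1 / r | r. 0 < r \<and> P r} = cmod v0 / (1 - (cmod \<zeta>)^2)"
  proof (rule Inf_reciprocals_eq[OF norm_ge_zero])
    fix r assume "0 < r" "P r"
    then obtain g where g: "hol_map D g" "g 0 = f \<zeta>" "cderiv g 0 = r *\<^sub>R (v0, v0 * d)"
      by (auto simp: P_def)
    with norm_fst_cderiv_le[OF proj g(1)] fst_f \<zeta> \<open>0 < r\<close>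
    show "r * cmod v0 \<le> 1 - (cmod \<zeta>)^2" by (simp add: scaleR_conv_of_real norm_mult)
  next
    fix r :: real assume "cmod v0 = 0"
    then show "P r" unfolding P_def using f \<zeta>
      by (intro exI[of _ "\<lambda>_. f \<zeta>"]) (auto simp: hol_map_def cderiv_def)
  next
    assume v0: "0 < cmod v0"
    \<comment> \<open>the Moebius reparametrisation of \<open>f\<close> centred at \<open>\<zeta>\<close> attains the bound\<close>
    define u where "u = v0 / of_real (cmod v0)"
    have "cmod u = 1" using v0 by (simp add: u_def norm_divide)
    define g where "g = f \<circ> (\<lambda>\<eta>. Moebius_function 0 (-\<zeta>) (u * \<eta>))"
    note reparam = hol_map_compose_Moebius[OF f \<zeta> \<open>cmod u = 1\<close>, folded g_def]
    have "u * of_real (1 - (cmod \<zeta>)^2) = of_real ((1 - (cmod \<zeta>)^2) / cmod v0) * v0"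
      using v0 by (simp add: u_def field_simps)
    with reparam(3) have "cderiv g 0 = ((1 - (cmod \<zeta>)^2) / cmod v0) *\<^sub>R (v0, v0 * d)"
      by (simp add: cd scaleR_conv_of_real mult_ac)
    with reparam(1,2) show "P ((1 - (cmod \<zeta>)^2) / cmod v0)" unfolding P_def by blast
  qed
  thus "kob_metric D (f \<zeta>) (v0 * fst (cderiv f \<zeta>), v0 * snd (cderiv f \<zeta>)) = poincare_metric \<zeta> v0"
    by (simp add: kob_metric_def poincare_metric_def cd P_def)
qed (fact f)

lemma inf_extremal_fst_eq_id:
  assumes proj: "fst ` D \<subseteq> ball 0 1"
    and extremal: "inf_extremal D (0, q) (1, a) f"
    and g: "hol_map D g" "g 0 = (0, q)" "cderiv g 0 = (1, a)"
    and z: "z \<in> ball 0 1"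
  shows "fst (f z) = z"
proof -
  from extremal obtain lam where f: "hol_map D f" "f 0 = (0, q)" "cderiv f 0 = lam *\<^sub>R (1, a)"
    and maximal: "\<And>g \<mu>. hol_map D g \<Longrightarrow> g 0 = (0, q) \<Longrightarrow> 0 < \<mu> \<Longrightarrow>
                         cderiv g 0 = \<mu> *\<^sub>R (1, a) \<Longrightarrow> \<mu> \<le> lam"
    unfolding inf_extremal_def by blast
  have "1 \<le> lam" using maximal[OF g(1,2), of 1] g(3) by simp
  define h where "h w = fst (f w)" for w
  have hol: "h holomorphic_on ball 0 1" and into: "\<And>w. cmod w < 1 \<Longrightarrow> cmod (h w) < 1"
    using f(1) proj unfolding hol_map_def h_def by force+
  have h0: "h 0 = 0" using f(2) by (simp add: h_def)
  have dh: "deriv h 0 = of_real lam" using f(3) by (simp add: cderiv_def h_def[abs_def] scaleR_conv_of_real)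
  with Schwarz_Lemma(2)[OF hol h0 into, of 0] \<open>1 \<le> lam\<close> have "lam = 1" by simp
  with dh Schwarz_Lemma(3)[OF hol h0 into, of 0]
  obtain \<alpha> where \<alpha>: "\<And>w. cmod w < 1 \<Longrightarrow> h w = \<alpha> * w" by auto
  have "eventually (\<lambda>w. h w = \<alpha> * w) (nhds 0)"
    using eventually_nhds_in_open[OF open_ball[of 0 1], of 0] by (rule eventually_mono) (use \<alpha> in auto)
  hence "deriv h 0 = \<alpha>" by (subst deriv_cong_ev) auto
  with \<alpha>[of z] z dh \<open>lam = 1\<close> show ?thesis by (simp add: h_def)
qed

section \<open>The domain \<open>\<Omega>\<close>\<close>

lemma fst_Omega_subset_disc:
  assumes \<epsilon>: "0 \<le> \<epsilon>"
  shows "fst ` Omega \<epsilon> \<subseteq> ball 0 1"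
proof
  fix z assume "z \<in> fst ` Omega \<epsilon>"
  then obtain w where "(z, w) \<in> Omega \<epsilon>" by force
  hence neg: "(cmod z)^2 + (cmod w)^2 - Re ((cnj z)^4 * w^2) - 1 < 0"
    and z: "cmod z < 1 + \<epsilon>" and w: "cmod w < 1 / (4 * (1 + \<epsilon>)^3)"
    by (auto simp: Omega_def rho_def)
  define A B K where "A = (cmod z)^2" and "B = (cmod w)^2" and "K = 4 * (1 + \<epsilon>)^3"
  have "Re ((cnj z)^4 * w^2) \<le> cmod ((cnj z)^4 * w^2)" by (rule complex_Re_le_cmod)
  also have "\<dots> = A^2 * B"
    by (simp add: A_def B_def norm_mult norm_power power_mult_distrib flip: power_mult)
  finally have factored: "(A - 1) * (1 - (A + 1) * B) < 0"
    using neg by (simp add: A_def B_def algebra_simps power2_eq_square)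
  have "A < (1 + \<epsilon>)^2" using z by (simp add: A_def power_strict_mono)
  also have "\<dots> \<le> (1 + \<epsilon>)^6" using \<epsilon> by (intro power_increasing) auto
  moreover have "1 \<le> (1 + \<epsilon>)^6" using \<epsilon> by (simp add: one_le_power)
  moreover have "K^2 = 16 * (1 + \<epsilon>)^6" by (simp add: K_def power_mult_distrib flip: power_mult)
  ultimately have "A + 1 \<le> K^2" by linarith
  have "K > 0" using \<epsilon> by (simp add: K_def)
  with w have "cmod w * K < 1" by (simp add: K_def pos_less_divide_eq)
  hence "(cmod w * K)^2 < 1" using \<open>K > 0\<close> power_strict_mono[of "cmod w * K" 1 2] by simp
  hence "B * K^2 < 1" by (simp add: B_def power_mult_distrib)
  moreover have "(A + 1) * B \<le> K^2 * B" using \<open>A + 1 \<le> K^2\<close> by (simp add: B_def mult_right_mono)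
  ultimately have "(A + 1) * B < 1" by (metis mult.commute order_le_less_trans)
  have "A < 1"
  proof (rule ccontr)
    assume "\<not> A < 1"
    with \<open>(A + 1) * B < 1\<close> have "0 \<le> (A - 1) * (1 - (A + 1) * B)" by simp
    with factored show False by simp
  qed
  thus "z \<in> ball 0 1" by (simp add: A_def abs_square_less_1)
qed

lemma rho_model_disc_coordinates_neg:
  fixes t x y :: real
  assumes "0 \<le> t" "t < 1" "x^2 + y^2 < 1/256"
  shows "t + ((1+t)*x)^2 + ((1-t)*y)^2 - t^2*(((1+t)*x)^2 - ((1-t)*y)^2) - 1 < 0"
proof -
  have eq: "t + ((1+t)*x)^2 + ((1-t)*y)^2 - t^2*(((1+t)*x)^2 - ((1-t)*y)^2) - 1
      = (1-t)*(-1 + (1+t)^3*x^2 + (1-t)*(1+t^2)*y^2)"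
    by (simp add: algebra_simps power2_eq_square power3_eq_cube)
  have "(1+t)^3 \<le> 2^3" by (rule power_mono) (use assms in auto)
  hence x: "(1+t)^3*x^2 \<le> 8*x^2" by (simp add: mult_right_mono)
  have "(1-t)*(1+t^2) \<le> 1*2"
    using assms by (intro mult_mono) (auto simp: power_le_one)
  hence y: "(1-t)*(1+t^2)*y^2 \<le> 2*y^2" by (simp add: mult_right_mono)
  have "-1 + (1+t)^3*x^2 + (1-t)*(1+t^2)*y^2 < 0"
    using x y assms(3) zero_le_power2[of x] zero_le_power2[of y] by linarith
  thus ?thesis unfolding eq using assms by (simp add: mult_pos_neg)
qed

lemma rho_model_disc_neg:
  fixes a z :: complex
  assumes a: "cmod a < 1/16" and z: "cmod z < 1"
  shows "rho (z, a*z + cnj a * z^3) < 0"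
proof -
  define t where "t = (cmod z)^2"
  define p where "p = a * cnj z"
  define X where "X = cnj z * (a + cnj a * z^2)"
  have zt: "z * cnj z = of_real t" unfolding t_def by (rule complex_norm_square[symmetric])
  \<comment> \<open>so \<open>Re X = (1 + t) Re p\<close> and \<open>Im X = (1 - t) Im p\<close>\<close>
  have X: "X = p + of_real t * cnj p"
    using zt by (simp add: X_def p_def algebra_simps power2_eq_square)
  have factor: "a*z + cnj a * z^3 = z * (a + cnj a * z^2)"
    by (simp add: algebra_simps power2_eq_square power3_eq_cube)
  have "(cmod (a*z + cnj a * z^3))^2 = (cmod X)^2"
    unfolding factor X_def by (simp add: norm_mult)
  moreover have "cnj z ^4 * (a*z + cnj a * z^3)^2 = of_real (t^2) * X^2"
  proof -
    have "cnj z ^4 * (z * (a + cnj a * z^2))^2 = (z * cnj z)^2 * X^2"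
      by (simp add: X_def power_mult_distrib power2_eq_square power4_eq_xxxx mult_ac)
    thus ?thesis unfolding factor zt by simp
  qed
  ultimately have "rho (z, a*z + cnj a * z^3) = t + (cmod X)^2 - Re (of_real (t^2) * X^2) - 1"
    by (simp add: rho_def t_def)
  also have "\<dots> = t + (Re X)^2 + (Im X)^2 - t^2 * ((Re X)^2 - (Im X)^2) - 1"
    unfolding cmod_power2 by (simp add: power2_eq_square)
  also have "\<dots> = t + ((1+t) * Re p)^2 + ((1-t) * Im p)^2
                  - t^2 * (((1+t) * Re p)^2 - ((1-t) * Im p)^2) - 1"
    unfolding X by (simp add: algebra_simps)
  also have "\<dots> < 0"
  proof (rule rho_model_disc_coordinates_neg)
    show "0 \<le> t" "t < 1" using z by (auto simp: t_def abs_square_less_1)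
    have "(cmod a)^2 < (1/16)^2" using a by (intro power_strict_mono) auto
    moreover have "(cmod p)^2 = (cmod a)^2 * t" by (simp add: p_def t_def norm_mult power_mult_distrib)
    moreover have "(cmod a)^2 * t \<le> (cmod a)^2" using \<open>t < 1\<close> by (simp add: mult_left_le)
    ultimately have "(cmod p)^2 < 1/256" by (simp add: power2_eq_square)
    thus "(Re p)^2 + (Im p)^2 < 1/256" by (simp add: cmod_power2)
  qed
  finally show ?thesis .
qed

lemma model_disc_in_Omega:
  assumes \<epsilon>: "0 \<le> \<epsilon>" and a: "cmod a < 1 / (16 * (1 + \<epsilon>)^3)"
  shows "hol_map (Omega \<epsilon>) (\<lambda>z. (z, a * z + cnj a * z^3))"
    and "cderiv (\<lambda>z. (z, a * z + cnj a * z^3)) 0 = (1, a)"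
proof -
  have "1 \<le> (1 + \<epsilon>)^3" using \<epsilon> by (simp add: one_le_power)
  hence "1 / (16 * (1 + \<epsilon>)^3) \<le> 1 / (16 * 1)"
    and "2 * (1 / (16 * (1 + \<epsilon>)^3)) \<le> 1 / (4 * (1 + \<epsilon>)^3)"
    using \<epsilon> by (auto intro!: divide_left_mono simp: divide_simps)
  hence a16: "cmod a < 1/16" and a4: "2 * cmod a < 1 / (4 * (1 + \<epsilon>)^3)"
    using a by linarith+
  have "(z, a * z + cnj a * z^3) \<in> Omega \<epsilon>" if z: "cmod z < 1" for z
  proof -
    have "cmod (a * z + cnj a * z^3) \<le> cmod a * cmod z + cmod a * cmod z ^ 3"
      using norm_triangle_ineq[of "a * z" "cnj a * z^3"] by (simp add: norm_mult norm_power)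
    also have "\<dots> \<le> cmod a * 1 + cmod a * 1"
      using z by (intro add_mono mult_left_mono) (auto simp: power_le_one)
    finally show ?thesis
      using rho_model_disc_neg[OF a16 z] a4 z \<epsilon> by (simp add: Omega_def)
  qed
  thus "hol_map (Omega \<epsilon>) (\<lambda>z. (z, a * z + cnj a * z^3))"
    by (auto simp: hol_map_def intro!: holomorphic_intros)
  have "deriv (\<lambda>w. a * w + cnj a * w^3) 0 = a"
    by (rule DERIV_imp_deriv) (auto intro!: derivative_eq_intros)
  thus "cderiv (\<lambda>z. (z, a * z + cnj a * z^3)) 0 = (1, a)" by (simp add: cderiv_def)
qed

theorem theorem2p3:
  fixes \<epsilon> c :: real and z0 :: complex and f :: "complex \<Rightarrow> complex \<times> complex"
  assumes "0 < \<epsilon>" "\<epsilon> < 1/100"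
    and "z0 \<in> ball 0 1" "z0 \<noteq> 0"
    and "0 \<le> c" "c < 1 / (16 * (1 + \<epsilon>)^3)"
    and "inf_extremal (Omega \<epsilon>) (0, 0) (1, of_real c * z0) f"
  shows "complex_geodesic (Omega \<epsilon>) f \<and> inf_complex_geodesic (Omega \<epsilon>) f"
proof -
  have \<epsilon>: "0 \<le> \<epsilon>" using assms(1) by simp
  have "cmod (of_real c * z0) \<le> c" using assms(3,5) by (simp add: norm_mult mult_left_le)
  hence "cmod (of_real c * z0) < 1 / (16 * (1 + \<epsilon>)^3)" using assms(6) by linarith
  note model = model_disc_in_Omega[OF \<epsilon> this]
  have proj: "fst ` Omega \<epsilon> \<subseteq> ball 0 1" by (rule fst_Omega_subset_disc[OF \<epsilon>])
  have fst_f: "\<And>z. z \<in> ball 0 1 \<Longrightarrow> fst (f z) = z"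
    by (rule inf_extremal_fst_eq_id[OF proj assms(7) model(1) _ model(2)]) simp_all
  have "hol_map (Omega \<epsilon>) f" using assms(7) by (simp add: inf_extremal_def)
  with proj fst_f show ?thesis
    using complex_geodesic_if_fst_eq_id inf_complex_geodesic_if_fst_eq_id by blast
qed

end
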